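(* Let $2\le k<n$ be integers, let $\mathcal D\subset\{0,1,\dots,n-1\}$ be an arithmetic progression with $k$ elements, and let $\alpha=\frac{\log k}{\log n}$. Let $p\ge2$ be an even integer. Then there are constants $c_p>0$ and $C_p\ge1$ depending only on $p$ such that for every $i\ge1$, $$\mathrm{Dec}_p(C_i)\ge c_p\left(\frac{k^{\frac12-\frac1p}}{C_p\,n^{2/p}}\right)^{i}=c_p\left(\frac{k^{\frac12-\frac1p-\frac{2}{p\alpha}}}{C_p}\right)^{i}.$$
   Context: For $i\ge1$, $C_i=\{\sum_{j=1}^i a_jn^{-j}: a_j\in\mathcal D\}$ and $\mathcal I_i$ is the collection of the $k^i$ intervals $[c,c+n^{-i}]$, $c\in C_i$. For $I\in\mathcal I_i$ let $\theta_I=\{(x,x^2+t): x\in I,\ |t|\le n^{-2i}\}$. $\mathrm{Dec}_p(C_i)$ is the smallest constant such that $$\Big\|\sum_{I\in\mathcal I_i}F_{\theta_I}\Big\|_{L^p(\mathbb R^2)}\le \mathrm{Dec}_p(C_i)\Big(\sum_{I\in\mathcal I_i}\|F_{\theta_I}\|_{L^p(\mathbb R^2)}^2\Big)^{1/2}$$ for all functions $F_{\theta_I}:\mathbb R^2\to\mathbb C$ with $\operatorname{supp}\widehat{F_{\theta_I}}\subset\theta_I$. *)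

theory Defs
  imports "HOL-Analysis.Analysis"
begin

definition fourier2 :: "(real \<times> real \<Rightarrow> complex) \<Rightarrow> real \<times> real \<Rightarrow> complex" where
  "fourier2 F \<xi> = (\<integral>x. F x * cis (- 2 * pi * (x \<bullet> \<xi>)) \<partial>lborel)"

definition fourier_support :: "(real \<times> real \<Rightarrow> complex) \<Rightarrow> (real \<times> real) set" where
  "fourier_support F = closure {\<xi>. fourier2 F \<xi> \<noteq> 0}"

definition Lp_norm2 :: "real \<Rightarrow> (real \<times> real \<Rightarrow> complex) \<Rightarrow> real" where
  "Lp_norm2 p F = (\<integral>x. norm (F x) powr p \<partial>lborel) powr (1 / p)"

text \<open>Admissible test functions: integrable (so the Fourier transform is the
  usual integral) and p-th power integrable.\<close>
definition admissible :: "real \<Rightarrow> (real \<times> real \<Rightarrow> complex) \<Rightarrow> bool" where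
  "admissible p F \<longleftrightarrow> integrable lborel F \<and> integrable lborel (\<lambda>x. norm (F x) powr p)"

definition arith_prog_digits :: "nat \<Rightarrow> nat \<Rightarrow> nat set \<Rightarrow> bool" where
  "arith_prog_digits n k D \<longleftrightarrow> D \<subseteq> {0..<n} \<and> card D = k \<and>
     (\<exists>a d. D = {a + d * j | j. j < k})"

definition Cset :: "nat \<Rightarrow> nat set \<Rightarrow> nat \<Rightarrow> real set" where
  "Cset n D i = {(\<Sum>j\<in>{1..i}. real (a j) / real n ^ j) | a. \<forall>j\<in>{1..i}. a j \<in> D}"

definition theta :: "nat \<Rightarrow> nat \<Rightarrow> real \<Rightarrow> (real \<times> real) set" where
  "theta n i c = {(x, x\<^sup>2 + t) | x t. c \<le> x \<and> x \<le> c + 1 / real n ^ i \<and> \<bar>t\<bar> \<le> 1 / real n ^ (2 * i)}"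

text \<open>Decoupling constant: the smallest constant (infimum, in the extended reals;
  +infinity if no finite constant works).\<close>
definition Dec :: "real \<Rightarrow> nat \<Rightarrow> nat set \<Rightarrow> nat \<Rightarrow> ereal" where
  "Dec p n D i = Inf {ereal K | K. \<forall>F :: real \<Rightarrow> real \<times> real \<Rightarrow> complex.
      (\<forall>c\<in>Cset n D i. admissible p (F c) \<and> fourier_support (F c) \<subseteq> theta n i c) \<longrightarrow>
      Lp_norm2 p (\<lambda>x. \<Sum>c\<in>Cset n D i. F c x)
        \<le> K * sqrt (\<Sum>c\<in>Cset n D i. (Lp_norm2 p (F c))\<^sup>2)}"

end

theory Submission
  imports Defs "HOL-Probability.Sinc_Integral"
begin

(*
  Test the decoupling inequality with one wave packet per c in C_i: a product of two Fejer
  kernels, whose Fourier transform lives in a square of side n^(-2i)/8, modulated to the point of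
  the parabola above the midpoint of [c, c + n^(-i)], so that its Fourier support lies in theta_c.
  All packets have the same modulus, so for p = 2s the p-th power of their sum is that modulus to
  the p times |Z|^2, where Z is an exponential sum over s-tuples of midpoints. On a square where
  the modulus is bounded below, orthogonality turns the integral of |Z|^2 into the number E of
  pairs of s-tuples with the same sum and the same sum of squares. Since D is an arithmetic
  progression, the sums of s midpoints take at most (sk)^i values, so Cauchy-Schwarz gives
  E >= N^(2s) / ((sk)^i s (2n^i)^2) with N = k^i, while the decoupling inequality gives
  E <= C_p K^p N^s. Hence K^p >= c_p (k^(s-1) / (s n^2))^i.
*)

lemma integrable_lborel_pair_mult:
  fixes f g :: "real \<Rightarrow> 'a::{real_normed_field, second_countable_topology, banach}"
  assumes f: "integrable lborel f" and g: "integrable lborel g"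
  shows "integrable (lborel::(real \<times> real) measure) (\<lambda>x. f (fst x) * g (snd x))"
proof -
  have [measurable]: "f \<in> borel_measurable lborel" "g \<in> borel_measurable lborel"
    using f g by auto
  have "integrable (lborel \<Otimes>\<^sub>M lborel) (\<lambda>x. f (fst x) * g (snd x))"
  proof (rule lborel_pair.Fubini_integrable)
    have "(\<lambda>x. \<integral>y. norm (f (fst (x, y)) * g (snd (x, y))) \<partial>lborel) = (\<lambda>x. norm (f x) * (\<integral>y. norm (g y) \<partial>lborel))"
      by (simp add: norm_mult)
    then show "integrable lborel (\<lambda>x. \<integral>y. norm (f (fst (x, y)) * g (snd (x, y))) \<partial>lborel)"
      using f by (simp add: integrable_mult_left integrable_norm)
    show "AE x in lborel. integrable lborel (\<lambda>y. f (fst (x, y)) * g (snd (x, y)))"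
      using g by (simp add: integrable_mult_right)
  qed measurable
  then show ?thesis by (simp add: lborel_prod)
qed

lemma integral_lborel_pair_mult:
  fixes f g :: "real \<Rightarrow> 'a::{real_normed_field, second_countable_topology, banach}"
  assumes f: "integrable lborel f" and g: "integrable lborel g"
  shows "(\<integral>x. f (fst x) * g (snd x) \<partial>(lborel::(real \<times> real) measure))
    = (\<integral>x. f x \<partial>lborel) * (\<integral>x. g x \<partial>lborel)"
proof -
  have "integrable (lborel \<Otimes>\<^sub>M lborel) (\<lambda>x. f (fst x) * g (snd x))"
    using integrable_lborel_pair_mult[OF f g] by (simp add: lborel_prod)
  from lborel_pair.integral_fst'[OF this] show ?thesis
    by (simp add: lborel_prod)
qed

lemma integral_lborel_odd_eq_0:
  fixes f :: "real \<Rightarrow> real"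
  assumes "\<And>t. f (- t) = - f t"
  shows "(\<integral>t. f t \<partial>lborel) = 0"
proof -
  have "(\<integral>t. f t \<partial>lborel) = \<bar>-1\<bar> *\<^sub>R (\<integral>t. f (0 + (-1) * t) \<partial>lborel)"
    by (rule lborel_integral_real_affine) simp
  with assms show ?thesis by simp
qed

lemma measurable_cis [measurable]:
  assumes "f \<in> borel_measurable M"
  shows "(\<lambda>x. cis (f x)) \<in> borel_measurable M"
proof -
  have "cis \<in> borel_measurable borel"
    by (intro borel_measurable_continuous_onI continuous_intros)
  with measurable_compose[OF assms] show ?thesis by blast
qed

subsection \<open>The Fejer kernel\<close>

definition fejer :: "real \<Rightarrow> real \<Rightarrow> real" where
  "fejer a t = (1 - cos (a * t)) / t\<^sup>2"

lemma one_minus_cos_le: "1 - cos (t::real) \<le> t\<^sup>2 / 2"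
proof -
  have "1 - cos t = 2 * (sin (t/2))\<^sup>2"
    using cos_double_sin[of "t/2"] by simp
  also have "(sin (t/2))\<^sup>2 \<le> (t/2)\<^sup>2"
    using abs_sin_x_le_abs_x[of "t/2"] by (metis abs_ge_zero power2_abs power_mono)
  finally show ?thesis by (simp add: power_divide)
qed

lemma fejer_nonneg: "0 \<le> fejer a t"
  unfolding fejer_def by (simp add: divide_nonneg_nonneg)

lemma fejer_le: "fejer a t \<le> a\<^sup>2 / 2"
proof (cases "t = 0")
  case False
  have "(1 - cos (a * t)) / t\<^sup>2 \<le> (a * t)\<^sup>2 / 2 / t\<^sup>2"
    by (intro divide_right_mono one_minus_cos_le) auto
  also have "\<dots> = a\<^sup>2 / 2" using False by (simp add: power_mult_distrib)
  finally show ?thesis unfolding fejer_def .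
qed (simp add: fejer_def)

lemma fejer_scale: "fejer a t = a\<^sup>2 * fejer 1 (0 + a * t)"
  unfolding fejer_def by (cases "t = 0"; cases "a = 0") (simp_all add: power_mult_distrib)

lemma fejer_measurable [measurable]: "fejer a \<in> borel_measurable borel"
  unfolding fejer_def[abs_def] by measurable

lemma fejer_1_le: "fejer 1 t \<le> 4 * inverse (1 + t\<^sup>2)"
proof (cases "t = 0")
  case False
  then have t2: "t\<^sup>2 > 0" by simp
  have "(1 - cos t) * (1 + t\<^sup>2) \<le> 4 * t\<^sup>2"
  proof (cases "t\<^sup>2 \<le> 1")
    case True
    have "(1 - cos t) * (1 + t\<^sup>2) \<le> (t\<^sup>2 / 2) * 2"
      using one_minus_cos_le[of t] True by (intro mult_mono) auto
    with t2 show ?thesis by linarith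
  next
    case False
    have "(1 - cos t) * (1 + t\<^sup>2) \<le> 2 * (1 + t\<^sup>2)"
      using cos_ge_minus_one[of t] by (intro mult_right_mono) auto
    then show ?thesis using False by simp
  qed
  then show ?thesis
    using t2 by (simp add: fejer_def field_simps add_pos_nonneg)
qed (simp add: fejer_def)

lemma integrable_fejer_1: "integrable lborel (fejer 1)"
proof (rule Bochner_Integration.integrable_bound)
  show "integrable lborel (\<lambda>t. 4 * inverse (1 + t\<^sup>2) :: real)"
    using integrable_inverse_1_plus_square by (simp add: set_integrable_def)
  show "AE t in lborel. norm (fejer 1 t) \<le> norm (4 * inverse (1 + t\<^sup>2))"
    using fejer_1_le fejer_nonneg by (auto intro!: AE_I2 simp: add_pos_nonneg)
qed measurable

lemma integral_fejer_1_le: "(\<integral>t. fejer 1 t \<partial>lborel) \<le> 4 * pi"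
proof -
  have "(\<integral>t. fejer 1 t \<partial>lborel) \<le> (\<integral>t. 4 * inverse (1 + t\<^sup>2) \<partial>lborel)"
    using integrable_inverse_1_plus_square
    by (intro integral_mono integrable_fejer_1 fejer_1_le) (simp add: set_integrable_def)
  also have "\<dots> = 4 * (\<integral>t. inverse (1 + t\<^sup>2) \<partial>lborel)"
    by simp
  also have "(\<integral>t. inverse (1 + t\<^sup>2) \<partial>lborel) = pi"
    using LBINT_inverse_1_plus_square
    by (simp add: interval_lebesgue_integral_def set_lebesgue_integral_def einterval_def)
  finally show ?thesis .
qed

lemma integrable_fejer: "integrable lborel (fejer a)"
proof (cases "a = 0")
  case True
  then have "fejer a = (\<lambda>_. 0)" by (simp add: fejer_def fun_eq_iff)
  then show ?thesis by simp
next
  case False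
  have "integrable lborel (\<lambda>t. a\<^sup>2 * fejer 1 (0 + a * t))"
    using lborel_integrable_real_affine[OF integrable_fejer_1 False, of 0] by simp
  then show ?thesis unfolding fejer_scale[of a] .
qed

lemma integral_fejer: "(\<integral>t. fejer a t \<partial>lborel) = \<bar>a\<bar> * (\<integral>t. fejer 1 t \<partial>lborel)"
proof (cases "a = 0")
  case False
  have "(\<integral>t. fejer 1 t \<partial>lborel) = \<bar>a\<bar> * (\<integral>t. fejer 1 (0 + a * t) \<partial>lborel)"
    using lborel_integral_real_affine[OF False, of "fejer 1" 0] by simp
  with False show ?thesis
    unfolding fejer_scale[of a] by (simp add: power2_eq_square field_simps)
qed (simp add: fejer_def)

lemma fejer_mult_cos:
  "fejer B t * cos (A * t) = fejer (A + B) t / 2 + fejer (A - B) t / 2 - fejer A t"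
proof -
  have e: "(1 - cos (B * t)) * cos (A * t)
      = (1 - cos ((A + B) * t)) / 2 + (1 - cos ((A - B) * t)) / 2 - (1 - cos (A * t))"
    by (simp add: distrib_right left_diff_distrib cos_add cos_diff) (simp add: field_simps)
  have "fejer B t * cos (A * t) = ((1 - cos (B * t)) * cos (A * t)) / t\<^sup>2"
    by (simp add: fejer_def)
  also have "\<dots> = fejer (A + B) t / 2 + fejer (A - B) t / 2 - fejer A t"
    unfolding e fejer_def by (cases "t = 0") (simp_all add: field_simps)
  finally show ?thesis .
qed

text \<open>The Fourier transform of the Fejer kernel is a triangle function; we only need that
  it vanishes outside \<open>[-b, b]\<close>, which follows from the product formula for
  \<open>fejer B t * cos (A * t)\<close> and the scaling law of its integral.\<close>
lemma fourier_fejer_eq_0: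
  assumes "0 \<le> b" and "b \<le> \<bar>u\<bar>"
  shows "(\<integral>t. complex_of_real (fejer (2 * pi * b) t) * cis (- (2 * pi * u * t)) \<partial>lborel) = 0"
proof -
  let ?B = "2 * pi * b" and ?A = "2 * pi * u"
  have bound: "integrable lborel (\<lambda>t. fejer ?B t * f (?A * t))"
    if f1: "\<And>x. \<bar>f x\<bar> \<le> 1" and [measurable]: "f \<in> borel_measurable borel" for f
  proof (rule Bochner_Integration.integrable_bound[OF integrable_fejer[of ?B]])
    show "AE t in lborel. norm (fejer ?B t * f (?A * t)) \<le> norm (fejer ?B t)"
      using f1 by (intro AE_I2) (simp add: fejer_nonneg abs_mult mult_left_le)
  qed measurable
  have "complex_of_real (fejer ?B t) * cis (- (?A * t))
      = complex_of_real (fejer ?B t * cos (?A * t)) - \<i> * complex_of_real (fejer ?B t * sin (?A * t))"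
    for t by (simp add: cis.ctr complex_eq_iff)
  then have "(\<integral>t. complex_of_real (fejer ?B t) * cis (- (?A * t)) \<partial>lborel)
      = (\<integral>t. complex_of_real (fejer ?B t * cos (?A * t))
           - \<i> * complex_of_real (fejer ?B t * sin (?A * t)) \<partial>lborel)"
    by simp
  also have "\<dots> = complex_of_real (\<integral>t. fejer ?B t * cos (?A * t) \<partial>lborel)
        - \<i> * complex_of_real (\<integral>t. fejer ?B t * sin (?A * t) \<partial>lborel)"
    using Bochner_Integration.integral_diff[OF integrable_of_real[OF bound[of cos]]
        integrable_mult_right[OF integrable_of_real[OF bound[of sin]], of \<i>]]
    by (simp del: of_real_mult)
  also have "(\<integral>t. fejer ?B t * sin (?A * t) \<partial>lborel) = 0"
    by (rule integral_lborel_odd_eq_0) (simp add: fejer_def)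
  also have "(\<integral>t. fejer ?B t * cos (?A * t) \<partial>lborel)
      = (\<integral>t. fejer (?A + ?B) t \<partial>lborel) / 2 + (\<integral>t. fejer (?A - ?B) t \<partial>lborel) / 2
        - (\<integral>t. fejer ?A t \<partial>lborel)"
    by (simp add: fejer_mult_cos integrable_fejer)
  also have "\<dots> = pi * (\<bar>u + b\<bar> + \<bar>u - b\<bar> - 2 * \<bar>u\<bar>) * (\<integral>t. fejer 1 t \<partial>lborel)"
  proof -
    have "\<bar>?A + ?B\<bar> = 2 * pi * \<bar>u + b\<bar>" "\<bar>?A - ?B\<bar> = 2 * pi * \<bar>u - b\<bar>"
        "\<bar>?A\<bar> = 2 * pi * \<bar>u\<bar>"
      by (simp_all add: abs_mult flip: distrib_left right_diff_distrib)
    then show ?thesis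
      unfolding integral_fejer[of "?A + ?B"] integral_fejer[of "?A - ?B"] integral_fejer[of ?A]
      by (simp add: algebra_simps)
  qed
  also have "\<bar>u + b\<bar> + \<bar>u - b\<bar> - 2 * \<bar>u\<bar> = 0"
    using assms by (cases "u \<ge> 0") auto
  finally show ?thesis by (simp add: mult.assoc)
qed

lemma fejer_power_le:
  assumes "1 \<le> p"
  shows "fejer a t ^ p \<le> (a\<^sup>2 / 2) ^ (p - 1) * fejer a t"
proof -
  have "fejer a t ^ p = fejer a t ^ (p - 1) * fejer a t"
    using assms by (cases p) auto
  also have "\<dots> \<le> (a\<^sup>2 / 2) ^ (p - 1) * fejer a t"
    by (intro mult_right_mono power_mono fejer_le fejer_nonneg)
  finally show ?thesis .
qed

lemma integrable_fejer_power:
  assumes "1 \<le> p"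
  shows "integrable lborel (\<lambda>t. fejer a t ^ p)"
proof (rule Bochner_Integration.integrable_bound)
  show "integrable lborel (\<lambda>t. (a\<^sup>2 / 2) ^ (p - 1) * fejer a t)"
    using integrable_fejer by simp
  show "AE t in lborel. norm (fejer a t ^ p) \<le> norm ((a\<^sup>2 / 2) ^ (p - 1) * fejer a t)"
    using fejer_power_le[OF assms] by (auto intro!: AE_I2 simp: fejer_nonneg)
qed measurable

lemma integral_fejer_power_le:
  assumes "1 \<le> p"
  shows "(\<integral>t. fejer a t ^ p \<partial>lborel) \<le> (a\<^sup>2 / 2) ^ (p - 1) * (4 * pi * \<bar>a\<bar>)"
proof -
  have "(\<integral>t. fejer a t ^ p \<partial>lborel) \<le> (\<integral>t. (a\<^sup>2 / 2) ^ (p - 1) * fejer a t \<partial>lborel)"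
    using assms
    by (intro integral_mono integrable_fejer_power integrable_mult_right integrable_fejer fejer_power_le)
  also have "\<dots> = (a\<^sup>2 / 2) ^ (p - 1) * (\<bar>a\<bar> * (\<integral>t. fejer 1 t \<partial>lborel))"
    by (simp add: integral_fejer[of a])
  also have "\<dots> \<le> (a\<^sup>2 / 2) ^ (p - 1) * (4 * pi * \<bar>a\<bar>)"
    using mult_left_mono[OF integral_fejer_1_le abs_ge_zero[of a]]
    by (intro mult_left_mono) (auto simp: mult.commute)
  finally show ?thesis .
qed

lemma fejer_ge_on_dyadic_interval:
  assumes "0 < L" and "L \<le> t" and "t \<le> 2 * L"
  shows "1 / (4 * L\<^sup>2) \<le> fejer (pi / (2 * L)) t"
proof -
  define y where "y = pi * t / (2 * L) - pi / 2"
  have y: "0 \<le> y" "y \<le> pi"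
    using assms by (simp_all add: y_def field_simps)
  have "cos (pi / (2 * L) * t) = cos (pi / 2 + y)"
    by (simp add: y_def)
  also have "\<dots> = - sin y" by (simp add: cos_add)
  finally have cos_nonpos: "cos (pi / (2 * L) * t) \<le> 0"
    using sin_ge_zero[OF y] by simp
  have "t\<^sup>2 \<le> (2 * L)\<^sup>2"
    using assms by (intro power_mono) auto
  then have "1 / (4 * L\<^sup>2) \<le> 1 / t\<^sup>2"
    using assms by (intro divide_left_mono) (auto simp: power_mult_distrib)
  also have "\<dots> \<le> fejer (pi / (2 * L)) t"
    unfolding fejer_def using cos_nonpos by (intro divide_right_mono) auto
  finally show ?thesis .
qed

subsection \<open>Wave packets\<close>

definition wave_packet :: "real \<Rightarrow> real \<times> real \<Rightarrow> real \<times> real \<Rightarrow> complex" where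
  "wave_packet b w x =
     cis (2 * pi * (w \<bullet> x)) * complex_of_real (fejer (2 * pi * b) (fst x) * fejer (2 * pi * b) (snd x))"

lemma norm_wave_packet:
  "norm (wave_packet b w x) = fejer (2 * pi * b) (fst x) * fejer (2 * pi * b) (snd x)"
  by (simp add: wave_packet_def norm_mult fejer_nonneg)

lemma wave_packet_measurable [measurable]: "wave_packet b w \<in> borel_measurable borel"
proof -
  have "(\<lambda>x. fejer (2 * pi * b) (fst x) * fejer (2 * pi * b) (snd x))
      \<in> borel_measurable (borel \<Otimes>\<^sub>M borel :: (real \<times> real) measure)"
    by measurable
  then have [measurable]: "(\<lambda>x. fejer (2 * pi * b) (fst x) * fejer (2 * pi * b) (snd x))
      \<in> borel_measurable (borel :: (real \<times> real) measure)"
    by (simp add: borel_prod)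
  have [measurable]: "(\<lambda>x::real \<times> real. w \<bullet> x) \<in> borel_measurable borel"
    by (intro borel_measurable_continuous_onI continuous_intros)
  show ?thesis
    unfolding wave_packet_def[abs_def] by measurable
qed

lemma integrable_fejer_cis:
  "integrable lborel (\<lambda>t. complex_of_real (fejer a t) * cis (- (2 * pi * u * t)))"
proof (rule Bochner_Integration.integrable_bound[OF integrable_fejer[of a]])
  show "AE t in lborel. norm (complex_of_real (fejer a t) * cis (- (2 * pi * u * t))) \<le> norm (fejer a t)"
    by (simp add: norm_mult)
qed measurable

lemma fourier2_wave_packet:
  fixes b :: real
  defines "\<phi> \<equiv> \<lambda>u. \<integral>t. complex_of_real (fejer (2 * pi * b) t) * cis (- (2 * pi * u * t)) \<partial>lborel"
  shows "fourier2 (wave_packet b w) \<xi> = \<phi> (fst \<xi> - fst w) * \<phi> (snd \<xi> - snd w)"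
proof -
  let ?f = "\<lambda>u t. complex_of_real (fejer (2 * pi * b) t) * cis (- (2 * pi * u * t))"
  have "wave_packet b w x * cis (- 2 * pi * (x \<bullet> \<xi>))
      = ?f (fst \<xi> - fst w) (fst x) * ?f (snd \<xi> - snd w) (snd x)" for x
  proof -
    have "cis (2 * pi * (w \<bullet> x)) * cis (- 2 * pi * (x \<bullet> \<xi>))
        = cis (- (2 * pi * (fst \<xi> - fst w) * fst x)) * cis (- (2 * pi * (snd \<xi> - snd w) * snd x))"
      unfolding cis_mult inner_prod_def by (simp add: algebra_simps)
    then show ?thesis
      unfolding wave_packet_def by (simp add: mult_ac)
  qed
  then show ?thesis
    unfolding fourier2_def \<phi>_def
    by (simp add: integral_lborel_pair_mult[OF integrable_fejer_cis integrable_fejer_cis])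
qed

lemma fourier_support_wave_packet:
  assumes "0 \<le> b"
  shows "fourier_support (wave_packet b w) \<subseteq> {\<xi>. \<bar>fst \<xi> - fst w\<bar> \<le> b \<and> \<bar>snd \<xi> - snd w\<bar> \<le> b}"
  unfolding fourier_support_def
proof (rule closure_minimal)
  show "{\<xi>. fourier2 (wave_packet b w) \<xi> \<noteq> 0} \<subseteq> {\<xi>. \<bar>fst \<xi> - fst w\<bar> \<le> b \<and> \<bar>snd \<xi> - snd w\<bar> \<le> b}"
    using fourier_fejer_eq_0[OF assms] by (force simp: fourier2_wave_packet)
  have "closed ({\<xi>::real \<times> real. \<bar>fst \<xi> - fst w\<bar> \<le> b} \<inter> {\<xi>. \<bar>snd \<xi> - snd w\<bar> \<le> b})"
    by (intro closed_Int closed_Collect_le continuous_intros)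
  then show "closed {\<xi>::real \<times> real. \<bar>fst \<xi> - fst w\<bar> \<le> b \<and> \<bar>snd \<xi> - snd w\<bar> \<le> b}"
    by (simp add: Collect_conj_eq)
qed

lemma norm_wave_packet_powr:
  assumes "1 \<le> p"
  shows "norm (wave_packet b w x) powr real p
    = fejer (2 * pi * b) (fst x) ^ p * fejer (2 * pi * b) (snd x) ^ p"
  using assms by (simp add: norm_wave_packet powr_realpow' fejer_nonneg power_mult_distrib)

lemma admissible_wave_packet:
  assumes "1 \<le> p"
  shows "admissible (real p) (wave_packet b w)"
  unfolding admissible_def
proof
  show "integrable lborel (wave_packet b w)"
    by (rule Bochner_Integration.integrable_bound[OF integrable_lborel_pair_mult[OF integrable_fejer integrable_fejer]])
      (auto simp: norm_wave_packet fejer_nonneg)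
  show "integrable lborel (\<lambda>x. norm (wave_packet b w x) powr real p)"
    unfolding norm_wave_packet_powr[OF assms]
    using assms by (intro integrable_lborel_pair_mult integrable_fejer_power)
qed

lemma integral_norm_wave_packet_powr:
  assumes "1 \<le> p"
  shows "(\<integral>x. norm (wave_packet b w x) powr real p \<partial>lborel)
    = (\<integral>t. fejer (2 * pi * b) t ^ p \<partial>lborel)\<^sup>2"
  unfolding norm_wave_packet_powr[OF assms] power2_eq_square
  using assms by (intro integral_lborel_pair_mult integrable_fejer_power)

subsection \<open>Exponential sums on a box\<close>

lemma integral_cis_dyadic_interval:
  assumes L: "0 < L" and m: "\<alpha> * L = of_int m"
  shows "(\<integral>t. indicator {L..2*L} t *\<^sub>R cis (2 * pi * \<alpha> * t) \<partial>lborel)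
    = (if \<alpha> = 0 then complex_of_real L else 0)"
proof (cases "\<alpha> = 0")
  case True
  have "(\<integral>t. indicator {L..2*L} t *\<^sub>R (1::complex) \<partial>lborel) = measure lborel {L..2*L} *\<^sub>R 1"
    by (subst integral_scaleR_left) (auto intro!: integrable_real_indicator emeasure_compact_finite)
  with True L show ?thesis by (simp add: scaleR_conv_of_real)
next
  case False
  let ?F = "\<lambda>t. cis (2 * pi * \<alpha> * t) / (complex_of_real (2 * pi * \<alpha>) * \<i>)"
  have "(\<integral>t. indicator {L..2*L} t *\<^sub>R cis (2 * pi * \<alpha> * t) \<partial>lborel)
      = (LBINT t=L..2*L. cis (2 * pi * \<alpha> * t))"
    using L by (simp add: interval_integral_Icc set_lebesgue_integral_def)
  also have "\<dots> = ?F (2*L) - ?F L"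
  proof (rule interval_integral_FTC_finite)
    fix x
    have "((\<lambda>t. cis (2 * pi * \<alpha> * t)) has_vector_derivative
        (2 * pi * \<alpha>) *\<^sub>R (\<i> * cis (2 * pi * \<alpha> * x))) (at x within {min L (2 * L)..max L (2 * L)})"
      unfolding has_vector_derivative_def
      by (auto intro!: derivative_eq_intros simp: scaleR_scaleR mult.commute)
    from has_vector_derivative_divide[OF this, of "complex_of_real (2 * pi * \<alpha>) * \<i>"]
    show "(?F has_vector_derivative cis (2 * pi * \<alpha> * x)) (at x within {min L (2 * L)..max L (2 * L)})"
      using False by (simp add: scaleR_conv_of_real field_simps)
  qed (intro continuous_intros)
  also have "?F (2*L) = ?F L"
  proof -
    have "2 * pi * \<alpha> * (2 * L) = 2 * pi * real_of_int (2 * m)" "2 * pi * \<alpha> * L = 2 * pi * real_of_int m"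
      by (simp_all add: m[symmetric])
    then show ?thesis by (simp only: cis_multiple_2pi Ints_of_int)
  qed
  finally show ?thesis using False by simp
qed

lemma integral_square_cis:
  assumes L: "0 < L" and m1: "\<alpha> * L = of_int m1" and m2: "\<beta> * L = of_int m2"
  shows "(\<integral>x. indicator ({L..2*L} \<times> {L..2*L}) x *\<^sub>R cis (2 * pi * (\<alpha> * fst x + \<beta> * snd x))
      \<partial>(lborel::(real \<times> real) measure))
     = (if \<alpha> = 0 \<and> \<beta> = 0 then complex_of_real (L\<^sup>2) else 0)"
proof -
  have split: "indicator ({L..2*L} \<times> {L..2*L}) x *\<^sub>R cis (2 * pi * (\<alpha> * fst x + \<beta> * snd x))
      = (indicator {L..2*L} (fst x) *\<^sub>R cis (2 * pi * \<alpha> * fst x))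
        * (indicator {L..2*L} (snd x) *\<^sub>R cis (2 * pi * \<beta> * snd x))" for x :: "real \<times> real"
    by (cases x) (simp add: indicator_times cis_mult algebra_simps split: split_indicator)
  have int: "integrable lborel (\<lambda>t. indicator {L..2*L} t *\<^sub>R cis (2 * pi * \<gamma> * t))" for \<gamma>
    by (rule borel_integrable_compact) (auto intro!: continuous_intros)
  show ?thesis
    unfolding split integral_lborel_pair_mult[OF int int]
      integral_cis_dyadic_interval[OF L m1] integral_cis_dyadic_interval[OF L m2]
    by (simp add: power2_eq_square)
qed

definition coincidences :: "('t \<Rightarrow> 'v) \<Rightarrow> 't set \<Rightarrow> ('t \<times> 't) set" where
  "coincidences f T = {(t, t'). t \<in> T \<and> t' \<in> T \<and> f t = f t'}"

lemma sum_if_eq_card_coincidences: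
  fixes c :: "'a::comm_semiring_1"
  assumes "finite T"
  shows "(\<Sum>t\<in>T. \<Sum>t'\<in>T. if f t = f t' then c else 0) = of_nat (card (coincidences f T)) * c"
proof -
  have "(\<Sum>t\<in>T. \<Sum>t'\<in>T. if f t = f t' then c else 0) = (\<Sum>q\<in>T \<times> T. if f (fst q) = f (snd q) then c else 0)"
    by (simp add: sum.cartesian_product case_prod_beta)
  also have "\<dots> = (\<Sum>q\<in>{q\<in>T \<times> T. f (fst q) = f (snd q)}. c)"
    using assms by (intro sum.inter_filter[symmetric]) simp
  also have "{q\<in>T \<times> T. f (fst q) = f (snd q)} = coincidences f T"
    by (auto simp: coincidences_def)
  finally show ?thesis
    by simp
qed

text \<open>Orthogonality of the characters \<open>x \<mapsto> cis (2 * pi * (\<sigma> * P * x1 + \<tau> * Q * x2))\<close>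
  on the square \<open>[L, 2L]\<^sup>2\<close>, whose side is a common period of all of them.\<close>
lemma integral_square_norm_exp_sum:
  fixes T :: "'t set" and P Q :: "'t \<Rightarrow> int" and L \<sigma> \<tau> :: real and i j :: int
  assumes "finite T" and L: "0 < L"
    and \<sigma>: "\<sigma> * L = of_int i" "\<sigma> \<noteq> 0" and \<tau>: "\<tau> * L = of_int j" "\<tau> \<noteq> 0"
  shows "(\<integral>x. indicator ({L..2*L} \<times> {L..2*L}) x
      * (norm (\<Sum>t\<in>T. cis (2 * pi * (\<sigma> * P t * fst x + \<tau> * Q t * snd x))))\<^sup>2
      \<partial>(lborel::(real \<times> real) measure))
    = L\<^sup>2 * card (coincidences (\<lambda>t. (P t, Q t)) T)"
proof -
  define B where "B = {L..2*L} \<times> {L..2*L}"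
  define \<alpha> where "\<alpha> t t' = \<sigma> * of_int (P t - P t')" for t t'
  define \<beta> where "\<beta> t t' = \<tau> * of_int (Q t - Q t')" for t t'
  define Z where "Z x = (\<Sum>t\<in>T. cis (2 * pi * (\<sigma> * P t * fst x + \<tau> * Q t * snd x)))"
    for x :: "real \<times> real"
  have expand: "complex_of_real (indicator B x * (norm (Z x))\<^sup>2)
      = (\<Sum>t\<in>T. \<Sum>t'\<in>T. indicator B x *\<^sub>R cis (2 * pi * (\<alpha> t t' * fst x + \<beta> t t' * snd x)))" for x
  proof -
    have "Z x * cnj (Z x) = (\<Sum>t\<in>T. \<Sum>t'\<in>T. cis (2 * pi * (\<alpha> t t' * fst x + \<beta> t t' * snd x)))"
      unfolding Z_def cnj_sum cis_cnj sum_product cis_mult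
      by (intro sum.cong refl arg_cong[where f=cis]) (simp add: \<alpha>_def \<beta>_def algebra_simps)
    then show ?thesis
      by (simp only: of_real_mult complex_norm_square scaleR_conv_of_real sum_distrib_left)
  qed
  have orthogonal: "(\<integral>x. indicator B x *\<^sub>R cis (2 * pi * (\<alpha> t t' * fst x + \<beta> t t' * snd x)) \<partial>lborel)
      = (if (P t, Q t) = (P t', Q t') then complex_of_real (L\<^sup>2) else 0)" for t t'
  proof -
    have "\<alpha> t t' * L = of_int ((P t - P t') * i)" "\<beta> t t' * L = of_int ((Q t - Q t') * j)"
      using \<sigma> \<tau> by (simp_all add: \<alpha>_def \<beta>_def mult_ac flip: \<sigma>(1) \<tau>(1))
    from integral_square_cis[OF L this] show ?thesis
      using \<sigma> \<tau> by (simp add: B_def \<alpha>_def \<beta>_def)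
  qed
  have integrable: "integrable lborel
      (\<lambda>x::real \<times> real. indicator B x *\<^sub>R cis (2 * pi * (a * fst x + b * snd x)))" for a b
    unfolding B_def by (rule borel_integrable_compact) (auto intro!: continuous_intros compact_Times)
  have "complex_of_real (\<integral>x. indicator B x * (norm (Z x))\<^sup>2 \<partial>lborel)
      = (\<integral>x. (\<Sum>t\<in>T. \<Sum>t'\<in>T. indicator B x *\<^sub>R cis (2 * pi * (\<alpha> t t' * fst x + \<beta> t t' * snd x))) \<partial>lborel)"
    unfolding expand[symmetric] by (rule integral_complex_of_real[symmetric])
  also have "\<dots> = (\<Sum>t\<in>T. \<Sum>t'\<in>T.
      \<integral>x. indicator B x *\<^sub>R cis (2 * pi * (\<alpha> t t' * fst x + \<beta> t t' * snd x)) \<partial>lborel)"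
    by (simp add: integrable integrable_sum)
  also have "\<dots> = of_nat (card (coincidences (\<lambda>t. (P t, Q t)) T)) * complex_of_real (L\<^sup>2)"
    unfolding orthogonal using assms(1) by (rule sum_if_eq_card_coincidences)
  also have "\<dots> = complex_of_real (L\<^sup>2 * card (coincidences (\<lambda>t. (P t, Q t)) T))"
    by simp
  finally show ?thesis
    unfolding B_def Z_def of_real_eq_iff .
qed

lemma card_squared_le_coincidences:
  assumes "finite T"
  shows "(real (card T))\<^sup>2 \<le> real (card (coincidences f T)) * real (card (f ` T))"
proof -
  define fibre where "fibre y = {t\<in>T. f t = y}" for y
  have T_eq: "T = (\<Union>y\<in>f ` T. fibre y)" and E_eq: "coincidences f T = (\<Union>y\<in>f ` T. fibre y \<times> fibre y)"
    by (auto simp: fibre_def coincidences_def)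
  have "card T = (\<Sum>y\<in>f ` T. card (fibre y))"
    by (subst T_eq, rule card_UN_disjoint) (use assms in \<open>auto simp: fibre_def\<close>)
  moreover have "card (coincidences f T) = (\<Sum>y\<in>f ` T. card (fibre y) ^ 2)"
    unfolding E_eq using assms
    by (subst card_UN_disjoint) (auto simp: fibre_def card_cartesian_product power2_eq_square)
  ultimately show ?thesis
    using sum_squared_le_sum_of_squares[of "\<lambda>y. real (card (fibre y))" "f ` T"] by simp
qed

subsection \<open>Wave packets on the parabola\<close>

lemma sum_cis_power:
  assumes "finite U"
  shows "(\<Sum>\<mu>\<in>U. cis (\<theta> \<mu>)) ^ s = (\<Sum>t\<in>PiE {..<s} (\<lambda>_. U). cis (\<Sum>l<s. \<theta> (t l)))"
proof -
  have cis_sum: "(\<Prod>l<n. cis (f l)) = cis (\<Sum>l<n. f l)" for f :: "nat \<Rightarrow> real" and n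
    by (induction n) (simp_all add: cis_mult)
  have "(\<Sum>\<mu>\<in>U. cis (\<theta> \<mu>)) ^ s = (\<Prod>l<s. \<Sum>\<mu>\<in>U. cis (\<theta> \<mu>))"
    by simp
  also have "\<dots> = (\<Sum>t\<in>PiE {..<s} (\<lambda>_. U). \<Prod>l<s. cis (\<theta> (t l)))"
    using assms by (intro prod_sum_PiE) auto
  finally show ?thesis
    by (simp add: cis_sum)
qed

definition parabola_packet :: "nat \<Rightarrow> nat \<Rightarrow> real \<times> real \<Rightarrow> complex" where
  "parabola_packet R m = wave_packet (1 / (4 * real R ^ 2)) (real m / real R, (real m / real R)\<^sup>2)"

definition parabola_sums :: "nat \<Rightarrow> ('u \<Rightarrow> nat) \<Rightarrow> (nat \<Rightarrow> 'u) \<Rightarrow> nat \<times> nat" where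
  "parabola_sums s X t = (\<Sum>l<s. X (t l), \<Sum>l<s. X (t l) ^ 2)"

definition parabola_energy :: "nat \<Rightarrow> 'u set \<Rightarrow> ('u \<Rightarrow> nat) \<Rightarrow> nat" where
  "parabola_energy s U X = card (coincidences (parabola_sums s X) (PiE {..<s} (\<lambda>_. U)))"

lemma norm_sum_parabola_packets_powr:
  fixes U :: "'u set" and X :: "'u \<Rightarrow> nat"
  assumes "finite U" and "0 < R" and "p = 2 * s" and "1 \<le> s"
  shows "norm (\<Sum>\<mu>\<in>U. parabola_packet R (X \<mu>) x) powr real p
    = (fejer (pi / (2 * real R ^ 2)) (fst x) * fejer (pi / (2 * real R ^ 2)) (snd x)) ^ p
      * (norm (\<Sum>t\<in>PiE {..<s} (\<lambda>_. U). cis (2 * pi *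
          (real (fst (parabola_sums s X t)) / real R * fst x
           + real (snd (parabola_sums s X t)) / real R ^ 2 * snd x))))\<^sup>2"
proof -
  define \<phi> where "\<phi> = fejer (pi / (2 * real R ^ 2)) (fst x) * fejer (pi / (2 * real R ^ 2)) (snd x)"
  define \<theta> where "\<theta> \<mu> = 2 * pi * (real (X \<mu>) / real R * fst x + real (X \<mu>) ^ 2 / real R ^ 2 * snd x)"
    for \<mu>
  have "parabola_packet R (X \<mu>) x = complex_of_real \<phi> * cis (\<theta> \<mu>)" for \<mu>
    by (simp add: parabola_packet_def wave_packet_def \<phi>_def \<theta>_def inner_prod_def power_divide)
  then have sum_eq: "(\<Sum>\<mu>\<in>U. parabola_packet R (X \<mu>) x) = complex_of_real \<phi> * (\<Sum>\<mu>\<in>U. cis (\<theta> \<mu>))"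
    by (simp add: sum_distrib_left)
  have "norm (\<Sum>\<mu>\<in>U. parabola_packet R (X \<mu>) x) powr real p
      = norm (\<Sum>\<mu>\<in>U. parabola_packet R (X \<mu>) x) ^ p"
    using assms(3,4) by (intro powr_realpow') auto
  also have "\<dots> = \<phi> ^ p * (norm ((\<Sum>\<mu>\<in>U. cis (\<theta> \<mu>)) ^ s))\<^sup>2"
    unfolding sum_eq norm_mult norm_power assms(3)
    by (simp add: \<phi>_def fejer_nonneg power_mult_distrib norm_mult mult.commute[of s 2]
        flip: power_mult)
  also have "(\<Sum>\<mu>\<in>U. cis (\<theta> \<mu>)) ^ s = (\<Sum>t\<in>PiE {..<s} (\<lambda>_. U). cis (2 * pi *
      (real (fst (parabola_sums s X t)) / real R * fst x + real (snd (parabola_sums s X t)) / real R ^ 2 * snd x)))"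
    unfolding sum_cis_power[OF assms(1)] \<theta>_def parabola_sums_def
    by (simp add: sum_distrib_left sum_divide_distrib sum.distrib algebra_simps)
  finally show ?thesis
    unfolding \<phi>_def .
qed

lemma parabola_packet_measurable [measurable]: "parabola_packet R m \<in> borel_measurable borel"
  unfolding parabola_packet_def by (rule wave_packet_measurable)

lemma integrable_norm_sum_parabola_packets_powr:
  fixes U :: "'u set" and X :: "'u \<Rightarrow> nat"
  assumes "finite U" and "0 < R" and "p = 2 * s" and "1 \<le> s"
  shows "integrable lborel (\<lambda>x. norm (\<Sum>\<mu>\<in>U. parabola_packet R (X \<mu>) x) powr real p)"
proof (rule Bochner_Integration.integrable_bound)
  let ?a = "pi / (2 * real R ^ 2)" and ?T = "PiE {..<s} (\<lambda>_. U)"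
  show "integrable lborel (\<lambda>x::real \<times> real. fejer ?a (fst x) ^ p * fejer ?a (snd x) ^ p * real (card ?T) ^ 2)"
    using assms by (intro integrable_mult_left integrable_lborel_pair_mult integrable_fejer_power) auto
  have "norm (\<Sum>t\<in>?T. cis (\<theta> t)) \<le> real (card ?T)" for \<theta>
    using norm_sum[of "\<lambda>t. cis (\<theta> t)" ?T] by simp
  then show "AE x in lborel. norm (norm (\<Sum>\<mu>\<in>U. parabola_packet R (X \<mu>) x) powr real p)
      \<le> norm (fejer ?a (fst x) ^ p * fejer ?a (snd x) ^ p * real (card ?T) ^ 2)"
    unfolding norm_sum_parabola_packets_powr[OF assms]
    by (intro AE_I2) (auto simp: fejer_nonneg power_mult_distrib intro!: mult_left_mono power_mono)
qed measurable

lemma integral_square_norm_parabola_sums: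
  fixes U :: "'u set" and X :: "'u \<Rightarrow> nat"
  assumes "finite U" and "0 < R"
  shows "(\<integral>x. indicator ({real R ^ 2..2 * real R ^ 2} \<times> {real R ^ 2..2 * real R ^ 2}) x
      * (norm (\<Sum>t\<in>PiE {..<s} (\<lambda>_. U). cis (2 * pi *
          (real (fst (parabola_sums s X t)) / real R * fst x
           + real (snd (parabola_sums s X t)) / real R ^ 2 * snd x))))\<^sup>2 \<partial>lborel)
    = real R ^ 4 * parabola_energy s U X"
proof -
  define T where "T = PiE {..<s} (\<lambda>_. U)"
  have "finite T"
    using assms(1) by (simp add: T_def finite_PiE)
  moreover have "coincidences (\<lambda>t. (int (fst (parabola_sums s X t)), int (snd (parabola_sums s X t)))) T
      = coincidences (parabola_sums s X) T"
    by (auto simp: coincidences_def prod_eq_iff)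
  ultimately show ?thesis
    unfolding parabola_energy_def T_def[symmetric]
    using assms(2) integral_square_norm_exp_sum[where T = T and L = "real R ^ 2" and \<sigma> = "1 / real R"
        and i = "int R" and \<tau> = "1 / real R ^ 2" and j = 1
        and P = "\<lambda>t. int (fst (parabola_sums s X t))" and Q = "\<lambda>t. int (snd (parabola_sums s X t))"]
    by (simp add: power2_eq_square power4_eq_xxxx mult_ac)
qed

lemma integral_norm_sum_parabola_packets_powr_ge:
  fixes U :: "'u set" and X :: "'u \<Rightarrow> nat"
  assumes "finite U" and "0 < R" and "p = 2 * s" and "1 \<le> s"
  shows "(1 / (4 * real R ^ 4)) ^ (2 * p) * (real R ^ 4 * parabola_energy s U X)
    \<le> (\<integral>x. norm (\<Sum>\<mu>\<in>U. parabola_packet R (X \<mu>) x) powr real p \<partial>lborel)"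
proof -
  define m where "m = 1 / (4 * real R ^ 4)"
  define B where "B = {real R ^ 2..2 * real R ^ 2} \<times> {real R ^ 2..2 * real R ^ 2}"
  define \<phi> where "\<phi> x = fejer (pi / (2 * real R ^ 2)) (fst x) * fejer (pi / (2 * real R ^ 2)) (snd x)"
    for x :: "real \<times> real"
  define Z where "Z x = (\<Sum>t\<in>PiE {..<s} (\<lambda>_. U). cis (2 * pi *
      (real (fst (parabola_sums s X t)) / real R * fst x + real (snd (parabola_sums s X t)) / real R ^ 2 * snd x)))"
    for x :: "real \<times> real"
  have "m \<le> fejer (pi / (2 * real R ^ 2)) t" if "t \<in> {real R ^ 2..2 * real R ^ 2}" for t
    using fejer_ge_on_dyadic_interval[of "real R ^ 2" t] assms(2) that by (simp add: m_def flip: power_mult)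
  then have "m * m \<le> \<phi> x" if "x \<in> B" for x
    unfolding \<phi>_def using that by (intro mult_mono) (auto simp: B_def m_def mem_Times_iff fejer_nonneg)
  then have "indicator B x * (m ^ (2 * p) * (norm (Z x))\<^sup>2) \<le> \<phi> x ^ p * (norm (Z x))\<^sup>2" for x
    by (cases "x \<in> B") (auto simp: power_mult power2_eq_square m_def \<phi>_def fejer_nonneg
        intro!: mult_right_mono power_mono)
  then have "(\<integral>x. indicator B x * (m ^ (2 * p) * (norm (Z x))\<^sup>2) \<partial>lborel)
      \<le> (\<integral>x. norm (\<Sum>\<mu>\<in>U. parabola_packet R (X \<mu>) x) powr real p \<partial>lborel)"
    unfolding norm_sum_parabola_packets_powr[OF assms] \<phi>_def Z_def
    using integrable_norm_sum_parabola_packets_powr[OF assms, unfolded norm_sum_parabola_packets_powr[OF assms]]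
    by (intro integral_mono') (auto simp: fejer_nonneg)
  also have "(\<integral>x. indicator B x * (m ^ (2 * p) * (norm (Z x))\<^sup>2) \<partial>lborel)
      = m ^ (2 * p) * (\<integral>x. indicator B x * (norm (Z x))\<^sup>2 \<partial>lborel)"
    by (simp add: mult.left_commute[of _ "m ^ (2 * p)"])
  finally show ?thesis
    unfolding B_def Z_def integral_square_norm_parabola_sums[OF assms(1,2)] m_def .
qed

lemma parabola_energy_pos:
  assumes "finite U" and "U \<noteq> {}"
  shows "0 < parabola_energy s U X"
proof -
  obtain t where t: "t \<in> PiE {..<s} (\<lambda>_. U)"
    using assms(2) by (metis PiE_eq_empty_iff all_not_in_conv)
  have "finite (coincidences (parabola_sums s X) (PiE {..<s} (\<lambda>_. U)))"
    by (rule finite_subset[of _ "PiE {..<s} (\<lambda>_. U) \<times> PiE {..<s} (\<lambda>_. U)"])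
      (auto simp: coincidences_def assms(1) finite_PiE)
  moreover have "(t, t) \<in> coincidences (parabola_sums s X) (PiE {..<s} (\<lambda>_. U))"
    using t by (simp add: coincidences_def)
  ultimately show ?thesis
    unfolding parabola_energy_def by (auto simp: card_gt_0_iff)
qed

lemma fejer_power_bound_sq_eq:
  fixes R p :: nat
  assumes "0 < R" and "1 \<le> p"
  defines "a \<equiv> pi / (2 * real R ^ 2)"
  shows "((a\<^sup>2 / 2) ^ (p - 1) * (4 * pi * a))\<^sup>2
    = (1 / (4 * real R ^ 4)) ^ (2 * p) * real R ^ 4 * (256 * (pi ^ 4 / 4) ^ p)"
proof -
  obtain q where q: "p = Suc q" using assms(2) by (cases p) auto
  define x where "x = pi ^ 4 / (64 * real R ^ 8)"
  have r: "real R \<noteq> 0" using assms(1) by simp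
  have "((a\<^sup>2 / 2) ^ q * (4 * pi * a))\<^sup>2 = ((a\<^sup>2 / 2)\<^sup>2) ^ q * (16 * pi\<^sup>2 * a\<^sup>2)"
    by (simp add: power_mult_distrib flip: power_mult) (simp add: mult.commute)
  also have "(a\<^sup>2 / 2)\<^sup>2 = x"
    by (simp add: a_def x_def power_divide power_mult_distrib flip: power_mult)
  also have "16 * pi\<^sup>2 * a\<^sup>2 = real R ^ 4 * 256 * x"
  proof -
    have "real R ^ 8 = real R ^ 4 * real R ^ 4" by simp
    with r show ?thesis
      by (simp add: a_def x_def power_divide power_mult_distrib field_simps flip: power_mult)
  qed
  also have "x ^ q * (real R ^ 4 * 256 * x) = (1 / (4 * real R ^ 4)) ^ (2 * p) * real R ^ 4 * (256 * (pi ^ 4 / 4) ^ p)"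
  proof -
    have "(1 / (4 * real R ^ 4)) ^ (2 * p) * (pi ^ 4 / 4) ^ p
        = ((1 / (4 * real R ^ 4))\<^sup>2 * (pi ^ 4 / 4)) ^ p"
      by (simp only: power_mult power_mult_distrib)
    also have "(1 / (4 * real R ^ 4))\<^sup>2 * (pi ^ 4 / 4) = x"
      by (simp add: x_def power_divide power_mult_distrib flip: power_mult)
    finally have "(1 / (4 * real R ^ 4)) ^ (2 * p) * real R ^ 4 * (256 * (pi ^ 4 / 4) ^ p) = real R ^ 4 * 256 * x ^ p"
      by (simp add: mult_ac)
    then show ?thesis
      by (simp add: q mult_ac)
  qed
  finally show ?thesis
    unfolding q by simp
qed

lemma integral_norm_sum_parabola_packets_powr_le:
  fixes U :: "'u set" and X :: "'u \<Rightarrow> nat" and K :: real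
  assumes "finite U" and "U \<noteq> {}" and "0 < R" and p: "p = 2 * s" and "1 \<le> s"
    and decoupling: "Lp_norm2 (real p) (\<lambda>x. \<Sum>\<mu>\<in>U. parabola_packet R (X \<mu>) x)
      \<le> K * sqrt (\<Sum>\<mu>\<in>U. (Lp_norm2 (real p) (parabola_packet R (X \<mu>)))\<^sup>2)"
  shows "0 < K"
    and "(\<integral>x. norm (\<Sum>\<mu>\<in>U. parabola_packet R (X \<mu>) x) powr real p \<partial>lborel)
      \<le> K ^ p * real (card U) ^ s * (\<integral>t. fejer (pi / (2 * real R ^ 2)) t ^ p \<partial>lborel)\<^sup>2"
proof -
  define A where "A = (\<integral>t. fejer (pi / (2 * real R ^ 2)) t ^ p \<partial>lborel)"
  define I where "I = (\<integral>x. norm (\<Sum>\<mu>\<in>U. parabola_packet R (X \<mu>) x) powr real p \<partial>lborel)"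
  have "1 \<le> p"
    using assms by simp
  have "2 * pi * (1 / (4 * real R ^ 2)) = pi / (2 * real R ^ 2)"
    by simp
  then have "Lp_norm2 (real p) (parabola_packet R m) = (A\<^sup>2) powr (1 / real p)" for m
    unfolding Lp_norm2_def parabola_packet_def integral_norm_wave_packet_powr[OF \<open>1 \<le> p\<close>] A_def
    by simp
  with decoupling have upper: "I powr (1 / real p) \<le> K * (sqrt (real (card U)) * (A\<^sup>2) powr (1 / real p))"
    by (simp add: Lp_norm2_def I_def real_sqrt_mult)
  have "0 < (1 / (4 * real R ^ 4)) ^ (2 * p) * (real R ^ 4 * parabola_energy s U X)"
    using assms(3) parabola_energy_pos[OF assms(1,2)] by simp
  then have "0 < I"
    unfolding I_def using integral_norm_sum_parabola_packets_powr_ge[OF assms(1,3,4,5)] by (rule less_le_trans)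
  then have "0 < I powr (1 / real p)"
    by simp
  show "0 < K"
  proof (rule ccontr)
    assume "\<not> 0 < K"
    then have "K * (sqrt (real (card U)) * (A\<^sup>2) powr (1 / real p)) \<le> 0"
      by (intro mult_nonpos_nonneg) auto
    with upper \<open>0 < I powr (1 / real p)\<close> show False by linarith
  qed
  have root_power: "(x powr (1 / real p)) ^ p = x" if "0 \<le> x" for x
    using that \<open>1 \<le> p\<close> by (simp add: root_powr_inverse[symmetric] real_root_pow_pos2)
  have "I = (I powr (1 / real p)) ^ p"
    using \<open>0 < I\<close> by (simp add: root_power)
  also have "\<dots> \<le> (K * (sqrt (real (card U)) * (A\<^sup>2) powr (1 / real p))) ^ p"
    using upper by (intro power_mono) auto
  also have "\<dots> = K ^ p * real (card U) ^ s * A\<^sup>2"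
  proof -
    have "sqrt (real (card U)) ^ p = real (card U) ^ s"
      unfolding p by (simp add: power_mult)
    moreover have "((A\<^sup>2) powr (1 / real p)) ^ p = A\<^sup>2"
      by (simp add: root_power)
    ultimately show ?thesis
      by (simp add: power_mult_distrib)
  qed
  finally show "I \<le> K ^ p * real (card U) ^ s * A\<^sup>2" .
qed

text \<open>On the square \<open>[R\<^sup>2, 2 R\<^sup>2]\<^sup>2\<close> the modulus of the packets is bounded below, and the
  \<open>s\<close>-th power of their common phase factor is an exponential sum whose mean square counts
  coincidences; the scale \<open>R\<close> cancels against the \<open>L\<^sup>p\<close> norms of the single packets.\<close>
lemma parabola_energy_le_decoupling_constant:
  fixes U :: "'u set" and X :: "'u \<Rightarrow> nat" and K :: real
  assumes "finite U" and "U \<noteq> {}" and "0 < R" and p: "p = 2 * s" and "1 \<le> s"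
    and decoupling: "Lp_norm2 (real p) (\<lambda>x. \<Sum>\<mu>\<in>U. parabola_packet R (X \<mu>) x)
      \<le> K * sqrt (\<Sum>\<mu>\<in>U. (Lp_norm2 (real p) (parabola_packet R (X \<mu>)))\<^sup>2)"
  shows "0 < K" and "real (parabola_energy s U X) \<le> 256 * (pi ^ 4 / 4) ^ p * K ^ p * real (card U) ^ s"
proof -
  note upper = integral_norm_sum_parabola_packets_powr_le[OF assms]
  then show "0 < K" by simp
  define a where "a = pi / (2 * real R ^ 2)"
  define c where "c = (1 / (4 * real R ^ 4)) ^ (2 * p) * real R ^ 4"
  define E where "E = real (parabola_energy s U X)"
  define I where "I = (\<integral>x. norm (\<Sum>\<mu>\<in>U. parabola_packet R (X \<mu>) x) powr real p \<partial>lborel)"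
  define A where "A = (\<integral>t. fejer a t ^ p \<partial>lborel)"
  have "1 \<le> p" and "0 < c"
    using assms by (simp_all add: c_def)
  have "c * E \<le> I"
    using integral_norm_sum_parabola_packets_powr_ge[OF assms(1,3,4,5)]
    by (simp add: c_def E_def I_def mult.assoc)
  also have "I \<le> K ^ p * real (card U) ^ s * A\<^sup>2"
    using upper(2) unfolding I_def A_def a_def .
  also have "\<dots> \<le> K ^ p * real (card U) ^ s * ((a\<^sup>2 / 2) ^ (p - 1) * (4 * pi * a))\<^sup>2"
  proof -
    have "0 \<le> A"
      unfolding A_def by (intro integral_nonneg_AE AE_I2) (simp add: fejer_nonneg)
    moreover have "A \<le> (a\<^sup>2 / 2) ^ (p - 1) * (4 * pi * a)"
      using integral_fejer_power_le[OF \<open>1 \<le> p\<close>, of a] by (simp add: A_def a_def)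
    ultimately show ?thesis
      using \<open>0 < K\<close> by (intro mult_left_mono power_mono) auto
  qed
  also have "((a\<^sup>2 / 2) ^ (p - 1) * (4 * pi * a))\<^sup>2 = c * (256 * (pi ^ 4 / 4) ^ p)"
    using fejer_power_bound_sq_eq[OF assms(3) \<open>1 \<le> p\<close>] by (simp add: a_def c_def)
  finally show "real (parabola_energy s U X) \<le> 256 * (pi ^ 4 / 4) ^ p * K ^ p * real (card U) ^ s"
    using \<open>0 < c\<close> by (simp add: E_def mult_ac)
qed

subsection \<open>Digit expansions\<close>

definition base_value :: "nat \<Rightarrow> nat \<Rightarrow> (nat \<Rightarrow> nat) \<Rightarrow> nat" where
  "base_value n i a = (\<Sum>j\<in>{1..i}. a j * n ^ (i - j))"

lemma base_value_Suc: "base_value n (Suc i) a = base_value n i a * n + a (Suc i)"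
proof -
  have "base_value n (Suc i) a = (\<Sum>j\<in>{1..i}. a j * n ^ (Suc i - j)) + a (Suc i)"
    unfolding base_value_def by (simp add: sum.cl_ivl_Suc)
  also have "(\<Sum>j\<in>{1..i}. a j * n ^ (Suc i - j)) = (\<Sum>j\<in>{1..i}. a j * n ^ (i - j) * n)"
    by (intro sum.cong refl) (simp add: Suc_diff_le)
  also have "\<dots> = base_value n i a * n"
    unfolding base_value_def by (simp add: sum_distrib_right)
  finally show ?thesis .
qed

lemma base_value_less:
  assumes "\<forall>j\<in>{1..i}. a j < n"
  shows "base_value n i a < n ^ i"
  using assms
proof (induction i)
  case (Suc i)
  then have IH: "base_value n i a + 1 \<le> n ^ i" and "a (Suc i) < n" by auto
  then have "base_value n i a * n + a (Suc i) < (base_value n i a + 1) * n"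
    by simp
  also have "\<dots> \<le> n ^ i * n"
    using IH by (rule mult_right_mono) simp
  finally show ?case by (simp add: base_value_Suc mult.commute)
qed (simp add: base_value_def)

lemma base_value_inj:
  assumes "\<forall>j\<in>{1..i}. a j < n \<and> b j < n" and "base_value n i a = base_value n i b"
  shows "\<forall>j\<in>{1..i}. a j = b j"
  using assms
proof (induction i)
  case (Suc i)
  then have less: "a (Suc i) < n" "b (Suc i) < n"
    and eq: "base_value n i a * n + a (Suc i) = base_value n i b * n + b (Suc i)"
    by (auto simp: base_value_Suc)
  from arg_cong[OF eq, of "\<lambda>x. x mod n"] less have last: "a (Suc i) = b (Suc i)"
    by simp
  with eq less have "base_value n i a = base_value n i b"
    by simp
  with Suc.IH Suc.prems(1) last show ?case
    by (auto simp: le_Suc_eq)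
qed simp

lemma base_value_arith_prog_less:
  assumes "A + d * (k - 1) < n" and "\<mu> \<in> PiE {1..i} (\<lambda>_. {..<k})"
  shows "base_value n i (\<lambda>j. A + d * \<mu> j) < n ^ i"
proof (intro base_value_less ballI)
  fix j assume "j \<in> {1..i}"
  with assms(2) have "\<mu> j < k"
    by (auto simp: PiE_iff)
  then have "d * \<mu> j \<le> d * (k - 1)"
    by (intro mult_le_mono2) arith
  with assms(1) show "A + d * \<mu> j < n"
    by linarith
qed

lemma base_value_sum:
  "(\<Sum>l\<in>L. base_value n i (a l)) = base_value n i (\<lambda>j. \<Sum>l\<in>L. a l j)"
  unfolding base_value_def sum_distrib_right by (rule sum.swap)

lemma sum_digits_eq_base_value:
  assumes "0 < n"
  shows "(\<Sum>j\<in>{1..i}. real (a j) / real n ^ j) = real (base_value n i a) / real n ^ i"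
proof -
  have "real (base_value n i a) / real n ^ i = (\<Sum>j\<in>{1..i}. real (a j) * real n ^ (i - j) / real n ^ i)"
    unfolding base_value_def by (simp add: sum_divide_distrib)
  also have "\<dots> = (\<Sum>j\<in>{1..i}. real (a j) / real n ^ j)"
    using assms by (intro sum.cong refl) (simp add: power_diff)
  finally show ?thesis by simp
qed

lemma Cset_arith_prog:
  assumes "arith_prog_digits n k D" and "2 \<le> k"
  obtains A d where "A + d * (k - 1) < n"
    and "Cset n D i = (\<lambda>\<mu>. real (base_value n i (\<lambda>j. A + d * \<mu> j)) / real n ^ i) ` PiE {1..i} (\<lambda>_. {..<k})"
    and "inj_on (\<lambda>\<mu>. base_value n i (\<lambda>j. A + d * \<mu> j)) (PiE {1..i} (\<lambda>_. {..<k}))"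
proof -
  obtain A d where D: "D = {A + d * j | j. j < k}" and "D \<subseteq> {0..<n}" and "card D = k"
    using assms(1) unfolding arith_prog_digits_def by blast
  have "d \<noteq> 0"
  proof
    assume "d = 0"
    then have "D = {A}" using D assms(2) by (auto intro: exI[of _ 0])
    with \<open>card D = k\<close> assms(2) show False by simp
  qed
  have digit: "A + d * j \<in> D" "A + d * j < n" if "j < k" for j
    using that D \<open>D \<subseteq> {0..<n}\<close> by auto
  then have last: "A + d * (k - 1) < n" using assms(2) by simp
  then have "0 < n" by simp
  let ?U = "PiE {1..i} (\<lambda>_. {..<k})"
  let ?c = "\<lambda>\<mu>. real (base_value n i (\<lambda>j. A + d * \<mu> j)) / real n ^ i"
  have "Cset n D i = ?c ` ?U"
  proof (intro equalityI subsetI)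
    fix x assume "x \<in> Cset n D i"
    then obtain a where x: "x = (\<Sum>j\<in>{1..i}. real (a j) / real n ^ j)" and a: "\<forall>j\<in>{1..i}. a j \<in> D"
      unfolding Cset_def by blast
    have "\<forall>j\<in>{1..i}. \<exists>m<k. a j = A + d * m"
      using a D by blast
    then obtain \<mu> where \<mu>: "\<forall>j\<in>{1..i}. \<mu> j < k \<and> a j = A + d * \<mu> j"
      by metis
    then have "restrict \<mu> {1..i} \<in> ?U" and "x = ?c (restrict \<mu> {1..i})"
      unfolding x sum_digits_eq_base_value[OF \<open>0 < n\<close>, symmetric] by (auto intro!: sum.cong)
    then show "x \<in> ?c ` ?U" by blast
  next
    fix x assume "x \<in> ?c ` ?U"
    then obtain \<mu> where "\<mu> \<in> ?U" and "x = ?c \<mu>" by blast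
    then show "x \<in> Cset n D i"
      unfolding Cset_def sum_digits_eq_base_value[OF \<open>0 < n\<close>, symmetric]
      by (auto intro!: exI[of _ "\<lambda>j. A + d * \<mu> j"] digit)
  qed
  moreover have "inj_on (\<lambda>\<mu>. base_value n i (\<lambda>j. A + d * \<mu> j)) ?U"
  proof (rule inj_onI)
    fix \<mu> \<nu> assume "\<mu> \<in> ?U" "\<nu> \<in> ?U"
      and "base_value n i (\<lambda>j. A + d * \<mu> j) = base_value n i (\<lambda>j. A + d * \<nu> j)"
    then have "\<forall>j\<in>{1..i}. A + d * \<mu> j = A + d * \<nu> j"
      by (intro base_value_inj) (auto intro: digit)
    with \<open>d \<noteq> 0\<close> \<open>\<mu> \<in> ?U\<close> \<open>\<nu> \<in> ?U\<close> show "\<mu> = \<nu>"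
      by (intro PiE_ext) auto
  qed
  ultimately show ?thesis
    using that last by blast
qed

lemma square_subset_parabola_strip:
  fixes c \<delta> :: real
  assumes "0 \<le> c" and "c + \<delta> \<le> 1" and "0 < \<delta>"
  shows "{\<xi>. \<bar>fst \<xi> - (c + \<delta> / 2)\<bar> \<le> \<delta>\<^sup>2 / 16 \<and> \<bar>snd \<xi> - (c + \<delta> / 2)\<^sup>2\<bar> \<le> \<delta>\<^sup>2 / 16}
     \<subseteq> {(x, x\<^sup>2 + t) | x t. c \<le> x \<and> x \<le> c + \<delta> \<and> \<bar>t\<bar> \<le> \<delta>\<^sup>2}"
proof (intro subsetI)
  fix \<xi> :: "real \<times> real"
  define x y w where "x = fst \<xi>" and "y = snd \<xi>" and "w = c + \<delta> / 2"
  assume "\<xi> \<in> {\<xi>. \<bar>fst \<xi> - (c + \<delta> / 2)\<bar> \<le> \<delta>\<^sup>2 / 16 \<and> \<bar>snd \<xi> - (c + \<delta> / 2)\<^sup>2\<bar> \<le> \<delta>\<^sup>2 / 16}"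
  then have x: "\<bar>x - w\<bar> \<le> \<delta>\<^sup>2 / 16" and y: "\<bar>y - w\<^sup>2\<bar> \<le> \<delta>\<^sup>2 / 16"
    by (simp_all add: x_def y_def w_def)
  have "\<delta>\<^sup>2 \<le> \<delta>"
    using assms by (simp add: power2_eq_square mult_le_cancel_right1)
  with x have "x - w \<le> \<delta> / 16" "w - x \<le> \<delta> / 16"
    unfolding abs_le_iff by auto
  then have "c \<le> x" "x \<le> c + \<delta>" "\<bar>x + w\<bar> \<le> 3"
    using assms unfolding w_def abs_le_iff by (auto intro!: conjI; linarith)+
  have "\<bar>w\<^sup>2 - x\<^sup>2\<bar> = \<bar>x - w\<bar> * \<bar>x + w\<bar>"
    by (simp add: power2_eq_square abs_mult[symmetric] algebra_simps)
  also have "\<dots> \<le> \<delta>\<^sup>2 / 16 * 3"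
    using x \<open>\<bar>x + w\<bar> \<le> 3\<close> by (intro mult_mono) auto
  finally have "\<bar>w\<^sup>2 - x\<^sup>2\<bar> \<le> 3 * \<delta>\<^sup>2 / 16" by simp
  moreover have "\<bar>y - x\<^sup>2\<bar> \<le> \<bar>y - w\<^sup>2\<bar> + \<bar>w\<^sup>2 - x\<^sup>2\<bar>"
    by (rule order_trans[OF _ abs_triangle_ineq]) simp
  ultimately have "\<bar>y - x\<^sup>2\<bar> \<le> \<delta>\<^sup>2"
    using y zero_le_power2[of \<delta>] by linarith
  moreover have "\<xi> = (x, x\<^sup>2 + (y - x\<^sup>2))"
    by (simp add: x_def y_def)
  ultimately show "\<xi> \<in> {(x, x\<^sup>2 + t) | x t. c \<le> x \<and> x \<le> c + \<delta> \<and> \<bar>t\<bar> \<le> \<delta>\<^sup>2}"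
    using \<open>c \<le> x\<close> \<open>x \<le> c + \<delta>\<close> by blast
qed

text \<open>The packet of \<^term>\<open>theta n i c\<close> for \<open>c = m / n ^ i\<close> is centred at the midpoint
  \<open>(2 m + 1) / (2 n ^ i)\<close> of the interval \<open>[c, c + n ^ -i]\<close>.\<close>
lemma fourier_support_parabola_packet_subset_theta:
  assumes "m < n ^ i"
  shows "fourier_support (parabola_packet (2 * n ^ i) (2 * m + 1)) \<subseteq> theta n i (real m / real n ^ i)"
proof -
  define \<delta> :: real where "\<delta> = 1 / real n ^ i"
  define c where "c = real m / real n ^ i"
  have "real m + 1 \<le> real n ^ i"
    using assms by (metis Suc_leI add.commute of_nat_Suc of_nat_le_iff of_nat_power)
  then have n: "0 < real n ^ i"
    by linarith
  have "0 \<le> c" "0 < \<delta>"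
    using n by (simp_all add: c_def \<delta>_def)
  moreover have "c + \<delta> \<le> 1"
    using \<open>real m + 1 \<le> real n ^ i\<close> n by (simp add: c_def \<delta>_def flip: add_divide_distrib)
  moreover have "parabola_packet (2 * n ^ i) (2 * m + 1) = wave_packet (\<delta>\<^sup>2 / 16) (c + \<delta> / 2, (c + \<delta> / 2)\<^sup>2)"
    using n by (auto simp: parabola_packet_def c_def \<delta>_def field_simps power2_eq_square)
  ultimately have "fourier_support (parabola_packet (2 * n ^ i) (2 * m + 1))
      \<subseteq> {(x, x\<^sup>2 + t) | x t. c \<le> x \<and> x \<le> c + \<delta> \<and> \<bar>t\<bar> \<le> \<delta>\<^sup>2}"
    using fourier_support_wave_packet[of "\<delta>\<^sup>2 / 16" "(c + \<delta> / 2, (c + \<delta> / 2)\<^sup>2)"]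
      square_subset_parabola_strip[of c \<delta>] by auto
  also have "\<dots> = theta n i (real m / real n ^ i)"
    by (simp add: theta_def c_def \<delta>_def power_mult power_divide mult.commute[of 2 i])
  finally show ?thesis .
qed

lemma card_sums_base_values_le:
  assumes "1 \<le> s"
  shows "card ((\<lambda>t. \<Sum>l<s. base_value n i (\<lambda>j. A + d * t l j)) ` PiE {..<s} (\<lambda>_. PiE {1..i} (\<lambda>_. {..<k})))
    \<le> (s * k) ^ i"
proof -
  let ?M = "PiE {1..i} (\<lambda>_. {..<s * k})"
  have "(\<lambda>t. \<Sum>l<s. base_value n i (\<lambda>j. A + d * t l j)) ` PiE {..<s} (\<lambda>_. PiE {1..i} (\<lambda>_. {..<k}))
      \<subseteq> (\<lambda>M. base_value n i (\<lambda>j. s * A + d * M j)) ` ?M"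
  proof clarify
    fix t assume t: "t \<in> PiE {..<s} (\<lambda>_. PiE {1..i} (\<lambda>_. {..<k}))"
    define M where "M = restrict (\<lambda>j. \<Sum>l<s. t l j) {1..i}"
    have "(\<Sum>l<s. t l j) < (\<Sum>l<s. k)" if "j \<in> {1..i}" for j
      using t that assms by (intro sum_strict_mono) (auto simp: PiE_iff lessThan_empty_iff)
    then have "M \<in> ?M"
      by (auto simp: M_def mult.commute)
    moreover have "(\<Sum>l<s. base_value n i (\<lambda>j. A + d * t l j)) = base_value n i (\<lambda>j. s * A + d * M j)"
      unfolding base_value_sum by (simp add: base_value_def M_def sum.distrib sum_distrib_left)
    ultimately show "(\<Sum>l<s. base_value n i (\<lambda>j. A + d * t l j)) \<in> (\<lambda>M. base_value n i (\<lambda>j. s * A + d * M j)) ` ?M"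
      by blast
  qed
  then have "card ((\<lambda>t. \<Sum>l<s. base_value n i (\<lambda>j. A + d * t l j)) ` PiE {..<s} (\<lambda>_. PiE {1..i} (\<lambda>_. {..<k})))
      \<le> card ((\<lambda>M. base_value n i (\<lambda>j. s * A + d * M j)) ` ?M)"
    by (intro card_mono finite_imageI finite_PiE) auto
  also have "\<dots> \<le> card ?M"
    by (intro card_image_le finite_PiE) auto
  finally show ?thesis
    by (simp add: card_PiE)
qed

lemma card_parabola_sums_le:
  fixes A d n k i s :: nat
  assumes "A + d * (k - 1) < n" and "1 \<le> s"
  defines "X \<equiv> \<lambda>\<mu>. 2 * base_value n i (\<lambda>j. A + d * \<mu> j) + 1"
  shows "card (parabola_sums s X ` PiE {..<s} (\<lambda>_. PiE {1..i} (\<lambda>_. {..<k})))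
    \<le> (s * k) ^ i * (s * (2 * n ^ i)\<^sup>2)"
proof -
  define U where "U = PiE {1..i} (\<lambda>_. {..<k})"
  define T where "T = PiE {..<s} (\<lambda>_. U)"
  define S where "S t = (\<Sum>l<s. base_value n i (\<lambda>j. A + d * t l j))" for t :: "nat \<Rightarrow> nat \<Rightarrow> nat"
  define W where "W = parabola_sums s X ` T"
  have "finite T"
    by (simp add: T_def U_def finite_PiE)
  have X_less: "X \<mu> < 2 * n ^ i" if "\<mu> \<in> U" for \<mu>
    using base_value_arith_prog_less[OF assms(1) that[unfolded U_def]] by (simp add: X_def)
  have "fst (parabola_sums s X t) = s + 2 * S t" for t
    unfolding parabola_sums_def X_def S_def fst_conv sum.distrib sum_distrib_left by simp
  then have "fst ` W = (\<lambda>v. s + 2 * v) ` S ` T"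
    by (simp add: W_def image_image)
  then have "card (fst ` W) \<le> card (S ` T)"
    by (simp add: card_image_le \<open>finite T\<close>)
  also have "\<dots> \<le> (s * k) ^ i"
    unfolding S_def T_def U_def by (rule card_sums_base_values_le[OF assms(2)])
  finally have fst_W: "card (fst ` W) \<le> (s * k) ^ i" .
  have "snd (parabola_sums s X t) < s * (2 * n ^ i)\<^sup>2" if "t \<in> T" for t
  proof -
    have "(\<Sum>l<s. X (t l) ^ 2) < (\<Sum>l<s. (2 * n ^ i)\<^sup>2)"
      using that assms(2) X_less
      by (intro sum_strict_mono power_strict_mono) (auto simp: T_def lessThan_empty_iff)
    then show ?thesis
      by (simp add: parabola_sums_def)
  qed
  then have "snd ` W \<subseteq> {..< s * (2 * n ^ i)\<^sup>2}"
    by (auto simp: W_def)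
  then have snd_W: "card (snd ` W) \<le> s * (2 * n ^ i)\<^sup>2"
    by (metis card_lessThan card_mono finite_lessThan)
  have "card W \<le> card (fst ` W \<times> snd ` W)"
    by (intro card_mono finite_cartesian_product finite_imageI subset_fst_snd)
      (simp_all add: W_def \<open>finite T\<close>)
  also have "\<dots> \<le> (s * k) ^ i * (s * (2 * n ^ i)\<^sup>2)"
    unfolding card_cartesian_product using fst_W snd_W by (rule mult_le_mono)
  finally show ?thesis
    by (simp add: W_def T_def U_def)
qed

lemma Cset_decoupling_parabola_packets:
  fixes K :: real
  assumes "arith_prog_digits n k D" and "2 \<le> k" and "1 \<le> p"
    and decoupling: "\<forall>F :: real \<Rightarrow> real \<times> real \<Rightarrow> complex.
      (\<forall>c\<in>Cset n D i. admissible (real p) (F c) \<and> fourier_support (F c) \<subseteq> theta n i c) \<longrightarrow>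
      Lp_norm2 (real p) (\<lambda>x. \<Sum>c\<in>Cset n D i. F c x)
        \<le> K * sqrt (\<Sum>c\<in>Cset n D i. (Lp_norm2 (real p) (F c))\<^sup>2)"
  obtains A d where "A + d * (k - 1) < n"
    and "Lp_norm2 (real p) (\<lambda>x. \<Sum>\<mu>\<in>PiE {1..i} (\<lambda>_. {..<k}).
          parabola_packet (2 * n ^ i) (2 * base_value n i (\<lambda>j. A + d * \<mu> j) + 1) x)
      \<le> K * sqrt (\<Sum>\<mu>\<in>PiE {1..i} (\<lambda>_. {..<k}).
          (Lp_norm2 (real p) (parabola_packet (2 * n ^ i) (2 * base_value n i (\<lambda>j. A + d * \<mu> j) + 1)))\<^sup>2)"
proof -
  obtain A d where last: "A + d * (k - 1) < n"
    and Cset_eq: "Cset n D i = (\<lambda>\<mu>. real (base_value n i (\<lambda>j. A + d * \<mu> j)) / real n ^ i) ` PiE {1..i} (\<lambda>_. {..<k})"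
    and inj: "inj_on (\<lambda>\<mu>. base_value n i (\<lambda>j. A + d * \<mu> j)) (PiE {1..i} (\<lambda>_. {..<k}))"
    using Cset_arith_prog[OF assms(1,2)] by blast
  define U where "U = PiE {1..i} (\<lambda>_. {..<k})"
  define m where "m \<mu> = base_value n i (\<lambda>j. A + d * \<mu> j)" for \<mu>
  define F where "F c = wave_packet (1 / (4 * real (2 * n ^ i) ^ 2))
    (c + 1 / real (2 * n ^ i), (c + 1 / real (2 * n ^ i))\<^sup>2)" for c
  have n: "0 < real n ^ i"
    using last by simp
  have m_less: "m \<mu> < n ^ i" if "\<mu> \<in> U" for \<mu>
    using base_value_arith_prog_less[OF last that[unfolded U_def]] by (simp add: m_def)
  have F_eq: "F (real (m \<mu>) / real n ^ i) = parabola_packet (2 * n ^ i) (2 * m \<mu> + 1)" for \<mu>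
  proof -
    have "real (m \<mu>) / real n ^ i + 1 / real (2 * n ^ i) = real (2 * m \<mu> + 1) / real (2 * n ^ i)"
      using n by (simp add: field_simps)
    then show ?thesis
      by (simp add: F_def parabola_packet_def)
  qed
  have "\<forall>c\<in>Cset n D i. admissible (real p) (F c) \<and> fourier_support (F c) \<subseteq> theta n i c"
    unfolding Cset_eq
    using F_eq admissible_wave_packet[OF assms(3)] fourier_support_parabola_packet_subset_theta[OF m_less]
    by (auto simp: F_def U_def m_def)
  with decoupling have "Lp_norm2 (real p) (\<lambda>x. \<Sum>c\<in>Cset n D i. F c x)
      \<le> K * sqrt (\<Sum>c\<in>Cset n D i. (Lp_norm2 (real p) (F c))\<^sup>2)"
    by blast
  moreover have "inj_on (\<lambda>\<mu>. real (m \<mu>) / real n ^ i) U"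
    using inj n by (auto simp: inj_on_def U_def m_def)
  ultimately have "Lp_norm2 (real p) (\<lambda>x. \<Sum>\<mu>\<in>U. F (real (m \<mu>) / real n ^ i) x)
      \<le> K * sqrt (\<Sum>\<mu>\<in>U. (Lp_norm2 (real p) (F (real (m \<mu>) / real n ^ i)))\<^sup>2)"
    by (simp add: Cset_eq sum.reindex U_def m_def)
  with last that show ?thesis
    unfolding F_eq by (simp add: U_def m_def)
qed

lemma parabola_energy_arith_prog_ge:
  fixes A d n k i s :: nat
  assumes "A + d * (k - 1) < n" and "1 \<le> s"
  defines "X \<equiv> \<lambda>\<mu>. 2 * base_value n i (\<lambda>j. A + d * \<mu> j) + 1"
  shows "(real k ^ i) ^ s * (real k ^ i) ^ s
    \<le> real (parabola_energy s (PiE {1..i} (\<lambda>_. {..<k})) X) * real ((s * k) ^ i * (s * (2 * n ^ i)\<^sup>2))"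
proof -
  define T where "T = PiE {..<s} (\<lambda>_. PiE {1..i} (\<lambda>_. {..<k}))"
  have "(real k ^ i) ^ s * (real k ^ i) ^ s = real (card T) ^ 2"
    by (simp add: T_def card_PiE power2_eq_square)
  also have "\<dots> \<le> real (parabola_energy s (PiE {1..i} (\<lambda>_. {..<k})) X) * real (card (parabola_sums s X ` T))"
    unfolding parabola_energy_def T_def by (rule card_squared_le_coincidences) (simp add: finite_PiE)
  also have "\<dots> \<le> real (parabola_energy s (PiE {1..i} (\<lambda>_. {..<k})) X) * real ((s * k) ^ i * (s * (2 * n ^ i)\<^sup>2))"
    using card_parabola_sums_le[OF assms(1,2), of i]
    by (intro mult_left_mono of_nat_mono) (simp_all add: T_def X_def)
  finally show ?thesis .
qed

text \<open>Cauchy--Schwarz bounds the energy below by \<open>N\<^sup>2\<^sup>s\<close> over the number of values of the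
  sums, and the decoupling inequality bounds it above by \<open>K\<^sup>p N\<^sup>s\<close>, where \<open>N = k\<^sup>i\<close>.\<close>
lemma Cset_decoupling_constant_ge:
  fixes p s :: nat and K :: real
  assumes p: "p = 2 * s" and "1 \<le> s" and "2 \<le> k" and "arith_prog_digits n k D"
    and decoupling: "\<forall>F :: real \<Rightarrow> real \<times> real \<Rightarrow> complex.
      (\<forall>c\<in>Cset n D i. admissible (real p) (F c) \<and> fourier_support (F c) \<subseteq> theta n i c) \<longrightarrow>
      Lp_norm2 (real p) (\<lambda>x. \<Sum>c\<in>Cset n D i. F c x)
        \<le> K * sqrt (\<Sum>c\<in>Cset n D i. (Lp_norm2 (real p) (F c))\<^sup>2)"
  shows "0 < K" and "(real k ^ (s - 1) / (real s * real n ^ 2)) ^ i \<le> 1024 * real s * (pi ^ 4 / 4) ^ p * K ^ p"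
proof -
  have "1 \<le> p" using assms by simp
  obtain A d where last: "A + d * (k - 1) < n"
    and "Lp_norm2 (real p) (\<lambda>x. \<Sum>\<mu>\<in>PiE {1..i} (\<lambda>_. {..<k}).
          parabola_packet (2 * n ^ i) (2 * base_value n i (\<lambda>j. A + d * \<mu> j) + 1) x)
      \<le> K * sqrt (\<Sum>\<mu>\<in>PiE {1..i} (\<lambda>_. {..<k}).
          (Lp_norm2 (real p) (parabola_packet (2 * n ^ i) (2 * base_value n i (\<lambda>j. A + d * \<mu> j) + 1)))\<^sup>2)"
    using Cset_decoupling_parabola_packets[OF assms(4,3) \<open>1 \<le> p\<close> decoupling] by blast
  moreover define U where "U = PiE {1..i} (\<lambda>_. {..<k})"
  moreover define X where "X = (\<lambda>\<mu>. 2 * base_value n i (\<lambda>j. A + d * \<mu> j) + 1)"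
  ultimately have dec: "Lp_norm2 (real p) (\<lambda>x. \<Sum>\<mu>\<in>U. parabola_packet (2 * n ^ i) (X \<mu>) x)
      \<le> K * sqrt (\<Sum>\<mu>\<in>U. (Lp_norm2 (real p) (parabola_packet (2 * n ^ i) (X \<mu>)))\<^sup>2)"
    by simp
  define Q where "Q = real ((s * k) ^ i * (s * (2 * n ^ i)\<^sup>2))"
  define C where "C = 256 * (pi ^ 4 / 4) ^ p"
  have U: "finite U" "U \<noteq> {}" "card U = k ^ i"
    using assms(3) by (simp_all add: U_def finite_PiE card_PiE PiE_eq_empty_iff lessThan_empty_iff)
  have "0 < 2 * n ^ i" and "0 < Q"
    using last assms(2,3) by (simp_all add: Q_def)
  note energy = parabola_energy_le_decoupling_constant[OF U(1,2) \<open>0 < 2 * n ^ i\<close> p assms(2) dec]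
  then show "0 < K" by simp
  have "(real k ^ i) ^ s * (real k ^ i) ^ s \<le> real (parabola_energy s U X) * Q"
    using parabola_energy_arith_prog_ge[OF last assms(2), of i, folded X_def U_def] by (simp add: Q_def)
  also have "\<dots> \<le> (C * K ^ p * (real k ^ i) ^ s) * Q"
    using energy(2) U(3) \<open>0 < Q\<close> by (intro mult_right_mono) (simp_all add: C_def power_mult)
  finally have bound: "(real k ^ i) ^ s \<le> C * K ^ p * Q"
    using assms(3) by (simp add: mult_ac)
  have "(real k ^ i) ^ s = real k ^ i * (real k ^ (s - 1)) ^ i"
    using assms(2) by (cases s) (simp_all add: mult.commute flip: power_mult)
  then have "(real k ^ (s - 1) / (real s * real n ^ 2)) ^ i = 4 * real s * (real k ^ i) ^ s / Q"
    using assms(2,3) by (simp add: Q_def power_divide power_mult_distrib field_simps flip: power_mult)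
  also have "\<dots> \<le> 4 * real s * (C * K ^ p * Q) / Q"
    using bound \<open>0 < Q\<close> by (intro divide_right_mono mult_left_mono) auto
  also have "\<dots> = 1024 * real s * (pi ^ 4 / 4) ^ p * K ^ p"
    using \<open>0 < Q\<close> by (simp add: C_def)
  finally show "(real k ^ (s - 1) / (real s * real n ^ 2)) ^ i \<le> 1024 * real s * (pi ^ 4 / 4) ^ p * K ^ p" .
qed

lemma ereal_le_Dec:
  assumes "\<And>K. \<forall>F :: real \<Rightarrow> real \<times> real \<Rightarrow> complex.
      (\<forall>c\<in>Cset n D i. admissible p (F c) \<and> fourier_support (F c) \<subseteq> theta n i c) \<longrightarrow>
      Lp_norm2 p (\<lambda>x. \<Sum>c\<in>Cset n D i. F c x) \<le> K * sqrt (\<Sum>c\<in>Cset n D i. (Lp_norm2 p (F c))\<^sup>2)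
    \<Longrightarrow> t \<le> K"
  shows "ereal t \<le> Dec p n D i"
  unfolding Dec_def using assms by (auto intro!: Inf_greatest)

lemma Cset_Dec_ge:
  fixes p s :: nat
  assumes p: "p = 2 * s" and s: "1 \<le> s" and k: "2 \<le> k" and ap: "arith_prog_digits n k D"
    and "0 \<le> t"
    and t: "1024 * real s * (pi ^ 4 / 4) ^ p * t ^ p \<le> (real k ^ (s - 1) / (real s * real n ^ 2)) ^ i"
  shows "ereal t \<le> Dec (real p) n D i"
proof (rule ereal_le_Dec, goal_cases)
  case (1 K)
  note K = Cset_decoupling_constant_ge[OF p s k ap 1]
  have "1024 * real s * (pi ^ 4 / 4) ^ p * t ^ p \<le> 1024 * real s * (pi ^ 4 / 4) ^ p * K ^ p"
    using t K(2) by linarith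
  then have "t ^ Suc (p - 1) \<le> K ^ Suc (p - 1)"
    using s p by simp
  then show "t \<le> K"
    using K(1) by (auto intro: power_le_imp_le_base)
qed

lemma decoupling_bound_power_eq:
  fixes p s :: nat and c :: real
  assumes p: "p = 2 * s" and "1 \<le> s" and "0 < k" and "0 < n" and "0 < c"
  shows "(c powr (1 / p) * (real k powr (1/2 - 1 / p) / (real s powr (1 / p) * real n powr (2 / p))) ^ i) ^ p
    = c * (real k ^ (s - 1) / (real s * real n ^ 2)) ^ i"
proof -
  have "0 < p" using assms by simp
  have powr_power: "(x powr r) ^ p = x powr (r * p)" if "0 < x" for x r :: real
    using that by (simp add: powr_realpow[symmetric] powr_powr)
  have "(1/2 - 1 / real p) * real p = real (s - 1)"
    using assms(1,2) by (simp add: field_simps of_nat_diff)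
  then have k: "(real k powr (1/2 - 1 / p)) ^ p = real k ^ (s - 1)"
    using assms(3) by (simp add: powr_power powr_realpow)
  have "2 / real p * real p = real (2::nat)"
    using \<open>0 < p\<close> by simp
  then have n: "(real n powr (2 / p)) ^ p = real n ^ 2"
    using assms(4) by (simp add: powr_power powr_realpow del: of_nat_numeral)
  have s: "(real s powr (1 / p)) ^ p = real s" and c: "(c powr (1 / p)) ^ p = c"
    using assms(2,5) \<open>0 < p\<close> by (simp_all add: powr_power)
  have "(x ^ i) ^ p = (x ^ p) ^ i" for x :: real
    by (simp add: mult.commute flip: power_mult)
  then show ?thesis
    by (simp add: power_mult_distrib power_divide k n s c)
qed

theorem mainTheorem5:
  fixes p :: nat
  assumes "even p" and "p \<ge> 2"
  shows "\<exists>cp Cp :: real. cp > 0 \<and> Cp \<ge> 1 \<and>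
    (\<forall>(n::nat) (k::nat) (D::nat set) (i::nat).
       2 \<le> k \<longrightarrow> k < n \<longrightarrow> arith_prog_digits n k D \<longrightarrow> 1 \<le> i \<longrightarrow>
       Dec (real p) n D i \<ge>
         ereal (cp * ((real k powr (1/2 - 1 / real p)) / (Cp * real n powr (2 / real p))) ^ i))"
proof -
  obtain s where p: "p = 2 * s"
    using assms(1) by blast
  with assms(2) have s: "1 \<le> s" by simp
  define c where "c = 1 / (1024 * real s * (pi ^ 4 / 4) ^ p)"
  have "0 < c" using s by (simp add: c_def)
  show ?thesis
  proof (intro exI conjI allI impI)
    show "0 < c powr (1 / real p)" "1 \<le> real s powr (1 / real p)"
      using \<open>0 < c\<close> s p by (auto intro: ge_one_powr_ge_zero)
    fix n k :: nat and D :: "nat set" and i :: nat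
    assume "2 \<le> k" "k < n" "arith_prog_digits n k D" "1 \<le> i"
    show "ereal (c powr (1 / real p) * (real k powr (1/2 - 1 / real p)
        / (real s powr (1 / real p) * real n powr (2 / real p))) ^ i) \<le> Dec (real p) n D i"
      using decoupling_bound_power_eq[OF p s, of k n c i] \<open>2 \<le> k\<close> \<open>k < n\<close> \<open>0 < c\<close>
      by (intro Cset_Dec_ge[OF p s \<open>2 \<le> k\<close> \<open>arith_prog_digits n k D\<close>]) (simp_all add: c_def)
  qed
qed


end
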